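(* Let $\Omega\subseteq\mathbb{R}^n$ be open, $u:\Omega\to\mathbb{R}^N$ continuous, $x\in\Omega$, $\xi\in\mathbb{S}^{N-1}$, and let $\psi\in C^2(\mathbb{R}^n)^N$ be a second contact $\xi$-map of $u$ at $x$. Then there exists a second contact $\xi$-map $\hat\psi\in C^2(\mathbb{R}^n)^N$ of $u$ at $x$ with $\hat\psi(x)=\psi(x)$, $D\hat\psi(x)=D\psi(x)$, $D^2\hat\psi(x)=D^2\psi(x)$, and such that $\xi^\perp R_{2,x}\hat\psi\equiv0$, where $R_{2,x}\hat\psi(y):=\hat\psi(y)-\hat\psi(x)-D\hat\psi(x)(y-x)-\frac12D^2\hat\psi(x):(y-x)\otimes(y-x)$.
   Context: $\xi^\perp:=I-\xi\otimes\xi$. For $\mathbf{X}=(\mathbf{X}_{\alpha ij})$, $\mathbf{X}:w\otimes w$ has components $\sum_{ij}\mathbf{X}_{\alpha ij}w_iw_j$. Second contact $\xi$-map: $\psi\in C^2(\mathbb{R}^n)^N$ is a second contact $\xi$-map of $u$ at $x$ if $\psi(x)=u(x)$ and for every $L>0$ there is a neighbourhood of $x$ in $\Omega$ on which $|\xi^\perp(u-\psi)(y)|^2\le L^2|y-x|^2[-\xi^\top(u-\psi)(y)]$. *)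

theory Defs
  imports "HOL-Analysis.Analysis"
begin

definition D1 :: "('a::euclidean_space \<Rightarrow> 'b::euclidean_space) \<Rightarrow> 'a \<Rightarrow> ('a \<Rightarrow>\<^sub>L 'b)" where
  "D1 f x = Blinfun (frechet_derivative f (at x))"

definition D2 :: "('a::euclidean_space \<Rightarrow> 'b::euclidean_space) \<Rightarrow> 'a \<Rightarrow> ('a \<Rightarrow>\<^sub>L ('a \<Rightarrow>\<^sub>L 'b))" where
  "D2 f x = Blinfun (frechet_derivative (D1 f) (at x))"

definition C2 :: "('a::euclidean_space \<Rightarrow> 'b::euclidean_space) \<Rightarrow> bool" where
  "C2 f \<longleftrightarrow> (\<forall>y. f differentiable (at y)) \<and> (\<forall>y. D1 f differentiable (at y))
            \<and> continuous_on UNIV (D2 f)"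

definition perp :: "'b::euclidean_space \<Rightarrow> 'b \<Rightarrow> 'b" where
  "perp \<xi> v = v - (\<xi> \<bullet> v) *\<^sub>R \<xi>"

definition second_contact_map ::
  "('a::euclidean_space) set \<Rightarrow> ('a \<Rightarrow> 'b::euclidean_space) \<Rightarrow> 'a \<Rightarrow> 'b \<Rightarrow> ('a \<Rightarrow> 'b) \<Rightarrow> bool" where
  "second_contact_map \<Omega> u x \<xi> \<psi> \<longleftrightarrow> C2 \<psi> \<and> \<psi> x = u x \<and>
     (\<forall>L>0. \<exists>r>0. \<forall>y\<in>\<Omega> \<inter> ball x r.
        (norm (perp \<xi> (u y - \<psi> y)))\<^sup>2 \<le> L\<^sup>2 * (norm (y - x))\<^sup>2 * (- (\<xi> \<bullet> (u y - \<psi> y))))"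

definition R2 :: "('a::euclidean_space \<Rightarrow> 'b::euclidean_space) \<Rightarrow> 'a \<Rightarrow> 'a \<Rightarrow> 'b" where
  "R2 f x y = f y - f x - blinfun_apply (D1 f x) (y - x)
              - (1/2) *\<^sub>R blinfun_apply (blinfun_apply (D2 f x) (y - x)) (y - x)"

end

theory Submission
  imports Defs
begin

(* Let R be the second-order Taylor remainder of \<psi> at x, and suppose g is C^2, vanishes to
   second order at x and satisfies |R y|^2 = o(|y - x|^2 g y).  Then \<psi>h = \<psi> + g \<xi> - \<xi>^perp R
   has the same 2-jet as \<psi>, its remainder R + g \<xi> - \<xi>^perp R is parallel to \<xi>, and
   u - \<psi>h = (u - \<psi>) + (\<xi>^perp R - g \<xi>) is a sum of two maps satisfying the contact inequality,
   a condition that is stable under sums.  To build g, write |R y| <= w (|y - x|) |y - x|^2 for a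
   modulus w with w t / t nonincreasing; then w (|t|) is continuous, integrating it twice gives an
   even C^2 function G >= t^2 w (|t|) / 6, and g y is the sum of G over the coordinates of y - x. *)

section \<open>C^2 maps with explicit derivatives\<close>

(* D1 and D2 are defined by choice; carrying the derivatives explicitly lets the closure rules
   below compute them. *)
definition has_C2_derivs ::
  "('a::euclidean_space \<Rightarrow> 'b::euclidean_space) \<Rightarrow> ('a \<Rightarrow> ('a \<Rightarrow>\<^sub>L 'b))
     \<Rightarrow> ('a \<Rightarrow> ('a \<Rightarrow>\<^sub>L ('a \<Rightarrow>\<^sub>L 'b))) \<Rightarrow> bool" where
  "has_C2_derivs f f' f'' \<longleftrightarrow>
     (\<forall>y. (f has_derivative blinfun_apply (f' y)) (at y)) \<and>
     (\<forall>y. (f' has_derivative blinfun_apply (f'' y)) (at y)) \<and> continuous_on UNIV f''"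

lemma has_C2_derivs_D1:
  assumes "has_C2_derivs f f' f''"
  shows "D1 f = f'"
proof
  fix y
  from assms have "(f has_derivative blinfun_apply (f' y)) (at y)"
    by (simp add: has_C2_derivs_def)
  then have "frechet_derivative f (at y) = blinfun_apply (f' y)"
    by (rule frechet_derivative_at[symmetric])
  then show "D1 f y = f' y"
    by (simp add: D1_def blinfun_apply_inverse)
qed

lemma has_C2_derivs_D2:
  assumes "has_C2_derivs f f' f''"
  shows "D2 f = f''"
proof
  fix y
  from assms have "(f' has_derivative blinfun_apply (f'' y)) (at y)"
    by (simp add: has_C2_derivs_def)
  then have "frechet_derivative f' (at y) = blinfun_apply (f'' y)"
    by (rule frechet_derivative_at[symmetric])
  then show "D2 f y = f'' y"
    by (simp add: D2_def has_C2_derivs_D1[OF assms] blinfun_apply_inverse)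
qed

lemma has_C2_derivs_imp_C2:
  assumes "has_C2_derivs f f' f''"
  shows "C2 f"
  using assms unfolding C2_def has_C2_derivs_D1[OF assms] has_C2_derivs_D2[OF assms]
  unfolding has_C2_derivs_def differentiable_def by blast

lemma C2_imp_has_C2_derivs:
  assumes "C2 f"
  shows "has_C2_derivs f (D1 f) (D2 f)"
proof -
  have "(f has_derivative blinfun_apply (D1 f y)) (at y)" for y
  proof -
    have "(f has_derivative frechet_derivative f (at y)) (at y)"
      using assms frechet_derivative_works unfolding C2_def by blast
    then show ?thesis
      by (simp add: D1_def bounded_linear_Blinfun_apply has_derivative_bounded_linear)
  qed
  moreover have "(D1 f has_derivative blinfun_apply (D2 f y)) (at y)" for y
  proof -
    have "(D1 f has_derivative frechet_derivative (D1 f) (at y)) (at y)"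
      using assms frechet_derivative_works unfolding C2_def by blast
    then show ?thesis
      by (simp add: D2_def bounded_linear_Blinfun_apply has_derivative_bounded_linear)
  qed
  ultimately show ?thesis
    using assms unfolding has_C2_derivs_def C2_def by blast
qed

lemma has_C2_derivs_const: "has_C2_derivs (\<lambda>y. c) (\<lambda>y. 0) (\<lambda>y. 0)"
  unfolding has_C2_derivs_def by (auto intro!: derivative_eq_intros continuous_intros)

lemma has_C2_derivs_affine: "has_C2_derivs (\<lambda>y. blinfun_apply A (y - x)) (\<lambda>y. A) (\<lambda>y. 0)"
  unfolding has_C2_derivs_def by (auto intro!: derivative_eq_intros continuous_intros)

lemma has_C2_derivs_add:
  assumes "has_C2_derivs f f' f''" "has_C2_derivs g g' g''"
  shows "has_C2_derivs (\<lambda>y. f y + g y) (\<lambda>y. f' y + g' y) (\<lambda>y. f'' y + g'' y)"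
  using assms unfolding has_C2_derivs_def
  by (auto simp: plus_blinfun.rep_eq intro!: has_derivative_add continuous_intros)

lemma has_C2_derivs_diff:
  assumes "has_C2_derivs f f' f''" "has_C2_derivs g g' g''"
  shows "has_C2_derivs (\<lambda>y. f y - g y) (\<lambda>y. f' y - g' y) (\<lambda>y. f'' y - g'' y)"
  using assms unfolding has_C2_derivs_def
  by (auto simp: minus_blinfun.rep_eq intro!: has_derivative_diff continuous_intros)

lemma has_C2_derivs_scaleR:
  assumes "has_C2_derivs f f' f''"
  shows "has_C2_derivs (\<lambda>y. c *\<^sub>R f y) (\<lambda>y. c *\<^sub>R f' y) (\<lambda>y. c *\<^sub>R f'' y)"
  using assms unfolding has_C2_derivs_def
  by (auto simp: scaleR_blinfun.rep_eq intro!: has_derivative_scaleR_right continuous_intros)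

lemma has_C2_derivs_blinfun:
  fixes T :: "'b::euclidean_space \<Rightarrow>\<^sub>L 'c::euclidean_space"
  assumes "has_C2_derivs f f' f''"
  shows "has_C2_derivs (\<lambda>y. blinfun_apply T (f y)) (\<lambda>y. T o\<^sub>L f' y)
           (\<lambda>y. Blinfun (\<lambda>A. T o\<^sub>L A) o\<^sub>L f'' y)"
proof -
  have compose: "bounded_linear (\<lambda>A::'a \<Rightarrow>\<^sub>L 'b. T o\<^sub>L A)"
    by (rule bounded_bilinear.bounded_linear_right[OF bounded_bilinear_blinfun_compose])
  have "((\<lambda>y. blinfun_apply T (f y)) has_derivative
      (\<lambda>h. blinfun_apply T (blinfun_apply (f' y) h))) (at y)" for y
    using assms unfolding has_C2_derivs_def
    by (intro bounded_linear.has_derivative[OF blinfun.bounded_linear_right]) auto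
  then have "((\<lambda>y. blinfun_apply T (f y)) has_derivative blinfun_apply (T o\<^sub>L f' y)) (at y)" for y
    by (simp add: blinfun_compose.rep_eq o_def)
  moreover have "((\<lambda>y. T o\<^sub>L f' y) has_derivative
      (\<lambda>h. T o\<^sub>L blinfun_apply (f'' y) h)) (at y)" for y
    using assms unfolding has_C2_derivs_def
    by (intro bounded_linear.has_derivative[OF compose]) auto
  then have "((\<lambda>y. T o\<^sub>L f' y) has_derivative
      blinfun_apply (Blinfun (\<lambda>A. T o\<^sub>L A) o\<^sub>L f'' y)) (at y)" for y
    by (simp add: bounded_linear_Blinfun_apply[OF compose] blinfun_compose.rep_eq o_def)
  moreover have "continuous_on UNIV (\<lambda>y. Blinfun (\<lambda>A. T o\<^sub>L A) o\<^sub>L f'' y)"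
    using assms unfolding has_C2_derivs_def by (auto intro: continuous_intros)
  ultimately show ?thesis
    unfolding has_C2_derivs_def by blast
qed

lemma has_C2_derivs_quadratic:
  assumes sym: "\<And>h k. blinfun_apply (blinfun_apply B h) k = blinfun_apply (blinfun_apply B k) h"
  shows "has_C2_derivs (\<lambda>y. blinfun_apply (blinfun_apply B (y - x)) (y - x))
           (\<lambda>y. 2 *\<^sub>R blinfun_apply B (y - x)) (\<lambda>y. 2 *\<^sub>R B)"
  unfolding has_C2_derivs_def
proof (intro conjI allI)
  fix y
  have "((\<lambda>y. blinfun_apply (blinfun_apply B (y - x)) (y - x)) has_derivative
      (\<lambda>h. blinfun_apply (blinfun_apply B (y - x)) h
        + blinfun_apply (blinfun_apply B h) (y - x))) (at y)"
    by (auto intro!: derivative_eq_intros)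
  then show "((\<lambda>y. blinfun_apply (blinfun_apply B (y - x)) (y - x)) has_derivative
      blinfun_apply (2 *\<^sub>R blinfun_apply B (y - x))) (at y)"
    by (simp add: sym[of _ "y - x"] scaleR_2 plus_blinfun.rep_eq)
  show "((\<lambda>y. 2 *\<^sub>R blinfun_apply B (y - x)) has_derivative blinfun_apply (2 *\<^sub>R B)) (at y)"
    by (auto simp: scaleR_blinfun.rep_eq intro!: derivative_eq_intros)
qed (auto intro: continuous_intros)

section \<open>Symmetry of the second derivative\<close>

lemma derivative_difference_le:
  fixes f' :: "'a::real_normed_vector \<Rightarrow> 'a \<Rightarrow>\<^sub>L 'b::real_normed_vector"
  assumes near: "\<And>y. norm (y - x) \<le> r \<Longrightarrow>
      norm (f' y - f' x - blinfun_apply B (y - x)) \<le> \<epsilon> * norm (y - x)"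
    and "norm (y - x) \<le> r" "norm (z - x) \<le> r" "0 \<le> \<epsilon>"
  shows "norm (blinfun_apply (f' y) h - blinfun_apply (f' z) h
           - blinfun_apply (blinfun_apply B (y - z)) h) \<le> 2 * \<epsilon> * r * norm h"
proof -
  let ?E = "\<lambda>y. f' y - f' x - blinfun_apply B (y - x)"
  have eq: "blinfun_apply (f' y) h - blinfun_apply (f' z) h
      - blinfun_apply (blinfun_apply B (y - z)) h = blinfun_apply (?E y - ?E z) h"
    by (simp add: blinfun.add_left blinfun.diff_left blinfun.diff_right algebra_simps)
  have E_le: "norm (?E y) \<le> \<epsilon> * r" "norm (?E z) \<le> \<epsilon> * r"
    using near[OF assms(2)] near[OF assms(3)] mult_left_mono[OF assms(2) assms(4)]
      mult_left_mono[OF assms(3) assms(4)] by linarith+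
  have "norm (blinfun_apply (?E y - ?E z) h) \<le> norm (?E y - ?E z) * norm h"
    by (rule norm_blinfun)
  also have "\<dots> \<le> (norm (?E y) + norm (?E z)) * norm h"
    by (intro mult_right_mono norm_triangle_ineq4 norm_ge_zero)
  also have "\<dots> \<le> (\<epsilon> * r + \<epsilon> * r) * norm h"
    using E_le by (intro mult_right_mono add_mono norm_ge_zero)
  finally show ?thesis
    unfolding eq by (simp add: algebra_simps)
qed

lemma second_difference_approx:
  fixes f :: "'a::real_normed_vector \<Rightarrow> 'b::real_normed_vector"
  assumes f': "\<And>y. (f has_derivative blinfun_apply (f' y)) (at y)"
    and near: "\<And>y. norm (y - x) \<le> t * (norm h + norm k) \<Longrightarrow>
      norm (f' y - f' x - blinfun_apply B (y - x)) \<le> \<epsilon> * norm (y - x)"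
    and "0 < t" "0 \<le> \<epsilon>"
  shows "norm (f (x + t *\<^sub>R h + t *\<^sub>R k) - f (x + t *\<^sub>R h) - f (x + t *\<^sub>R k) + f x
           - t\<^sup>2 *\<^sub>R blinfun_apply (blinfun_apply B k) h)
         \<le> 2 * \<epsilon> * (norm h + norm k) * norm h * t\<^sup>2"
proof -
  let ?C = "2 * \<epsilon> * (norm h + norm k) * norm h"
  define g where "g s = f (x + s *\<^sub>R h + t *\<^sub>R k) - f (x + s *\<^sub>R h)
    - (s * t) *\<^sub>R blinfun_apply (blinfun_apply B k) h" for s
  define v where "v s = blinfun_apply (f' (x + s *\<^sub>R h + t *\<^sub>R k)) h
    - blinfun_apply (f' (x + s *\<^sub>R h)) h - t *\<^sub>R blinfun_apply (blinfun_apply B k) h" for s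
  have g': "(g has_derivative (\<lambda>\<sigma>. \<sigma> *\<^sub>R v s)) (at s)" for s
  proof -
    have "(g has_derivative (\<lambda>\<sigma>. blinfun_apply (f' (x + s *\<^sub>R h + t *\<^sub>R k)) (\<sigma> *\<^sub>R h)
        - blinfun_apply (f' (x + s *\<^sub>R h)) (\<sigma> *\<^sub>R h)
        - (\<sigma> * t) *\<^sub>R blinfun_apply (blinfun_apply B k) h)) (at s)"
      unfolding g_def
      by (intro has_derivative_diff has_derivative_compose[OF _ f'])
        (auto intro!: derivative_eq_intros)
    then show ?thesis
      by (simp add: v_def blinfun.scaleR_right scaleR_diff_right)
  qed
  have v_le: "norm (v s) \<le> ?C * t" if "0 \<le> s" "s \<le> t" for s
  proof -
    have y: "norm (x + s *\<^sub>R h + t *\<^sub>R k - x) \<le> t * (norm h + norm k)"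
      using that norm_triangle_ineq[of "s *\<^sub>R h" "t *\<^sub>R k"] \<open>0 < t\<close>
        mult_right_mono[of s t "norm h"]
      by (simp add: algebra_simps)
    have z: "norm (x + s *\<^sub>R h - x) \<le> t * (norm h + norm k)"
      using that mult_right_mono[of s t "norm h"] \<open>0 < t\<close>
      by (simp add: algebra_simps add_increasing2)
    have "norm (v s) \<le> 2 * \<epsilon> * (t * (norm h + norm k)) * norm h"
      using derivative_difference_le[where y = "x + s *\<^sub>R h + t *\<^sub>R k" and z = "x + s *\<^sub>R h"
          and h = h, OF near y z \<open>0 \<le> \<epsilon>\<close>]
      by (simp add: v_def blinfun.scaleR_right blinfun.scaleR_left)
    then show ?thesis
      by (simp add: algebra_simps)
  qed
  have "norm (g t - g 0) \<le> ?C * t * norm (t - 0)"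
  proof (rule differentiable_bound[of "{0..t}" g "\<lambda>s \<sigma>. \<sigma> *\<^sub>R v s"])
    show "(g has_derivative (\<lambda>\<sigma>. \<sigma> *\<^sub>R v s)) (at s within {0..t})" for s
      using g' by (rule has_derivative_at_withinI)
    show "onorm (\<lambda>\<sigma>. \<sigma> *\<^sub>R v s) \<le> ?C * t" if "s \<in> {0..t}" for s
      using v_le[of s] that by (simp add: onorm_scaleR_left[OF bounded_linear_ident] onorm_id)
  qed (use \<open>0 < t\<close> in auto)
  then show ?thesis
    using \<open>0 < t\<close> by (simp add: g_def power2_eq_square algebra_simps)
qed

lemma second_derivative_symmetric_approx:
  fixes f :: "'a::real_normed_vector \<Rightarrow> 'b::real_normed_vector"
  assumes f': "\<And>y. (f has_derivative blinfun_apply (f' y)) (at y)"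
    and f'': "(f' has_derivative blinfun_apply B) (at x)"
    and "0 < \<epsilon>"
  shows "norm (blinfun_apply (blinfun_apply B k) h - blinfun_apply (blinfun_apply B h) k)
    \<le> \<epsilon> * (2 * (norm h + norm k)\<^sup>2)"
proof -
  let ?z = "blinfun_apply (blinfun_apply B k) h - blinfun_apply (blinfun_apply B h) k"
  let ?K = "2 * (norm h + norm k)\<^sup>2"
  obtain d where "0 < d" and near: "\<And>y. norm (y - x) < d \<Longrightarrow>
      norm (f' y - f' x - blinfun_apply B (y - x)) \<le> \<epsilon> * norm (y - x)"
    using f'' \<open>0 < \<epsilon>\<close> unfolding has_derivative_at_alt by blast
  define N where "N = norm h + norm k + 1"
  define t where "t = d / (2 * N)"
  have pos: "0 < N"
    unfolding N_def by (smt (verit) norm_ge_zero)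
  then have "0 < t"
    using \<open>0 < d\<close> by (simp add: t_def)
  have "t * (norm h + norm k) \<le> t * N"
    using \<open>0 < t\<close> by (simp add: N_def)
  also have "\<dots> = d / 2"
    using pos by (simp add: t_def)
  also have "\<dots> < d"
    using \<open>0 < d\<close> by simp
  finally have near': "norm (f' y - f' x - blinfun_apply B (y - x)) \<le> \<epsilon> * norm (y - x)"
    if "norm (y - x) \<le> t * (norm h + norm k)" for y
    using near that by simp
  let ?\<Delta> = "f (x + t *\<^sub>R h + t *\<^sub>R k) - f (x + t *\<^sub>R h) - f (x + t *\<^sub>R k) + f x"
  have hk: "norm (?\<Delta> - t\<^sup>2 *\<^sub>R blinfun_apply (blinfun_apply B k) h)
      \<le> 2 * \<epsilon> * (norm h + norm k) * norm h * t\<^sup>2"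
    using second_difference_approx[OF f' near' \<open>0 < t\<close>] \<open>0 < \<epsilon>\<close> by simp
  have "norm (y - x) \<le> t * (norm k + norm h) \<Longrightarrow>
      norm (f' y - f' x - blinfun_apply B (y - x)) \<le> \<epsilon> * norm (y - x)" for y
    using near' by (simp add: add.commute)
  from second_difference_approx[of f f' x t k h B \<epsilon>, OF f' this \<open>0 < t\<close>] \<open>0 < \<epsilon>\<close>
  have kh: "norm (?\<Delta> - t\<^sup>2 *\<^sub>R blinfun_apply (blinfun_apply B h) k)
      \<le> 2 * \<epsilon> * (norm h + norm k) * norm k * t\<^sup>2"
    by (simp only: ac_simps diff_conv_add_uminus less_imp_le)
  have "t\<^sup>2 * norm ?z = norm ((?\<Delta> - t\<^sup>2 *\<^sub>R blinfun_apply (blinfun_apply B h) k)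
      - (?\<Delta> - t\<^sup>2 *\<^sub>R blinfun_apply (blinfun_apply B k) h))"
    by (simp add: algebra_simps flip: scaleR_diff_right)
  also have "\<dots> \<le> t\<^sup>2 * (\<epsilon> * ?K)"
    using norm_triangle_ineq4 hk kh
    by (smt (verit, best) distrib_left mult.commute mult.left_commute power2_eq_square)
  finally show ?thesis
    using \<open>0 < t\<close> by simp
qed

lemma second_derivative_symmetric:
  fixes f :: "'a::real_normed_vector \<Rightarrow> 'b::real_normed_vector"
  assumes f': "\<And>y. (f has_derivative blinfun_apply (f' y)) (at y)"
    and f'': "(f' has_derivative blinfun_apply B) (at x)"
  shows "blinfun_apply (blinfun_apply B k) h = blinfun_apply (blinfun_apply B h) k"
proof -
  let ?z = "blinfun_apply (blinfun_apply B k) h - blinfun_apply (blinfun_apply B h) k"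
  let ?K = "2 * (norm h + norm k)\<^sup>2"
  have "norm ?z \<le> 0"
  proof (rule field_le_epsilon)
    fix e :: real assume "0 < e"
    have K: "0 < ?K + 1"
      by (simp add: add_nonneg_pos)
    have "norm ?z \<le> e / (?K + 1) * ?K"
      using second_derivative_symmetric_approx[OF f' f'', of "e / (?K + 1)"] \<open>0 < e\<close> K by simp
    also have "\<dots> \<le> e"
      using \<open>0 < e\<close> K by (simp add: pos_divide_le_eq algebra_simps)
    finally show "norm ?z \<le> 0 + e" by simp
  qed
  then show ?thesis by simp
qed

section \<open>Maps vanishing to second order\<close>

definition C2_flat_at :: "('a::euclidean_space \<Rightarrow> 'b::euclidean_space) \<Rightarrow> 'a \<Rightarrow> bool" where
  "C2_flat_at \<phi> x \<longleftrightarrow> C2 \<phi> \<and> \<phi> x = 0 \<and> D1 \<phi> x = 0 \<and> D2 \<phi> x = 0"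

lemma C2_flat_atI:
  assumes "has_C2_derivs \<phi> \<phi>' \<phi>''" "\<phi> x = 0" "\<phi>' x = 0" "\<phi>'' x = 0"
  shows "C2_flat_at \<phi> x"
  using assms has_C2_derivs_imp_C2[OF assms(1)]
  by (simp add: C2_flat_at_def has_C2_derivs_D1[OF assms(1)] has_C2_derivs_D2[OF assms(1)])

lemma C2_flat_at_diff:
  assumes "C2_flat_at \<phi> x" "C2_flat_at \<eta> x"
  shows "C2_flat_at (\<lambda>y. \<phi> y - \<eta> y) x"
proof -
  from assms have "has_C2_derivs (\<lambda>y. \<phi> y - \<eta> y) (\<lambda>y. D1 \<phi> y - D1 \<eta> y) (\<lambda>y. D2 \<phi> y - D2 \<eta> y)"
    by (intro has_C2_derivs_diff C2_imp_has_C2_derivs) (simp_all add: C2_flat_at_def)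
  then show ?thesis
    by (rule C2_flat_atI) (use assms in \<open>simp_all add: C2_flat_at_def\<close>)
qed

lemma C2_flat_at_linear:
  assumes T: "bounded_linear T" and \<phi>: "C2_flat_at \<phi> x"
  shows "C2_flat_at (\<lambda>y. T (\<phi> y)) x"
proof -
  from \<phi> have "has_C2_derivs \<phi> (D1 \<phi>) (D2 \<phi>)"
    unfolding C2_flat_at_def by (auto intro: C2_imp_has_C2_derivs)
  then have "has_C2_derivs (\<lambda>y. T (\<phi> y)) (\<lambda>y. Blinfun T o\<^sub>L D1 \<phi> y)
      (\<lambda>y. Blinfun (\<lambda>A. Blinfun T o\<^sub>L A) o\<^sub>L D2 \<phi> y)"
    using has_C2_derivs_blinfun[of \<phi> "D1 \<phi>" "D2 \<phi>" "Blinfun T"]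
    by (simp add: bounded_linear_Blinfun_apply[OF T])
  then show ?thesis
    by (rule C2_flat_atI)
      (use \<phi> linear_0[OF bounded_linear.linear[OF T]] in \<open>simp_all add: C2_flat_at_def\<close>)
qed

lemma C2_add_C2_flat_at:
  assumes "C2 \<psi>" "C2_flat_at \<phi> x"
  shows "C2 (\<lambda>y. \<psi> y + \<phi> y)" and "D1 (\<lambda>y. \<psi> y + \<phi> y) x = D1 \<psi> x"
    and "D2 (\<lambda>y. \<psi> y + \<phi> y) x = D2 \<psi> x" and "R2 (\<lambda>y. \<psi> y + \<phi> y) x y = R2 \<psi> x y + \<phi> y"
proof -
  from assms(2) have "C2 \<phi>" and \<phi>: "\<phi> x = 0" "D1 \<phi> x = 0" "D2 \<phi> x = 0"
    by (simp_all add: C2_flat_at_def)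
  have sum: "has_C2_derivs (\<lambda>y. \<psi> y + \<phi> y) (\<lambda>y. D1 \<psi> y + D1 \<phi> y) (\<lambda>y. D2 \<psi> y + D2 \<phi> y)"
    using assms(1) \<open>C2 \<phi>\<close> by (intro has_C2_derivs_add C2_imp_has_C2_derivs)
  then show "C2 (\<lambda>y. \<psi> y + \<phi> y)"
    by (rule has_C2_derivs_imp_C2)
  show D1: "D1 (\<lambda>y. \<psi> y + \<phi> y) x = D1 \<psi> x"
    using \<phi> by (simp add: has_C2_derivs_D1[OF sum])
  show D2: "D2 (\<lambda>y. \<psi> y + \<phi> y) x = D2 \<psi> x"
    using \<phi> by (simp add: has_C2_derivs_D2[OF sum])
  show "R2 (\<lambda>y. \<psi> y + \<phi> y) x y = R2 \<psi> x y + \<phi> y"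
    using \<phi> unfolding R2_def D1 D2 by (simp add: algebra_simps)
qed

lemma C2_flat_at_R2:
  assumes "C2 \<psi>"
  shows "C2_flat_at (R2 \<psi> x) x"
proof -
  let ?A = "D1 \<psi> x" and ?B = "D2 \<psi> x"
  have \<psi>: "has_C2_derivs \<psi> (D1 \<psi>) (D2 \<psi>)"
    using assms by (rule C2_imp_has_C2_derivs)
  then have "\<And>y. (\<psi> has_derivative blinfun_apply (D1 \<psi> y)) (at y)"
    and "(D1 \<psi> has_derivative blinfun_apply ?B) (at x)"
    unfolding has_C2_derivs_def by blast+
  note sym = second_derivative_symmetric[OF this]
  have "has_C2_derivs (R2 \<psi> x)
      (\<lambda>y. D1 \<psi> y - 0 - ?A - (1/2) *\<^sub>R (2 *\<^sub>R blinfun_apply ?B (y - x)))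
      (\<lambda>y. D2 \<psi> y - 0 - 0 - (1/2) *\<^sub>R (2 *\<^sub>R ?B))"
    unfolding R2_def[abs_def]
    by (intro has_C2_derivs_diff has_C2_derivs_const has_C2_derivs_affine has_C2_derivs_scaleR
        has_C2_derivs_quadratic \<psi> sym)
  then show ?thesis
    by (rule C2_flat_atI) (simp_all add: R2_def)
qed

lemma C2_flat_at_imp_small:
  assumes "C2_flat_at \<phi> x" "0 < e"
  shows "\<exists>d>0. \<forall>y. norm (y - x) < d \<longrightarrow> norm (\<phi> y) \<le> e * (norm (y - x))\<^sup>2"
proof -
  from assms(1) have \<phi>: "has_C2_derivs \<phi> (D1 \<phi>) (D2 \<phi>)" "\<phi> x = 0" "D1 \<phi> x = 0" "D2 \<phi> x = 0"
    unfolding C2_flat_at_def by (auto intro: C2_imp_has_C2_derivs)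
  then have "(D1 \<phi> has_derivative blinfun_apply (D2 \<phi> x)) (at x)"
    unfolding has_C2_derivs_def by blast
  then have "\<exists>d>0. \<forall>z. norm (z - x) < d \<longrightarrow> norm (D1 \<phi> z) \<le> e * norm (z - x)"
    using assms(2) \<phi>(3,4) unfolding has_derivative_at_alt by simp
  then obtain d where "0 < d" and D1_le: "\<And>z. norm (z - x) < d \<Longrightarrow> norm (D1 \<phi> z) \<le> e * norm (z - x)"
    by blast
  have "norm (\<phi> y) \<le> e * (norm (y - x))\<^sup>2" if "norm (y - x) < d" for y
  proof -
    let ?S = "cball x (norm (y - x))"
    have "norm (\<phi> y - \<phi> x) \<le> e * norm (y - x) * norm (y - x)"
    proof (rule differentiable_bound[of ?S \<phi> "\<lambda>z. blinfun_apply (D1 \<phi> z)"])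
      show "(\<phi> has_derivative blinfun_apply (D1 \<phi> z)) (at z within ?S)" for z
        using \<phi>(1) unfolding has_C2_derivs_def by (blast intro: has_derivative_at_withinI)
      show "onorm (blinfun_apply (D1 \<phi> z)) \<le> e * norm (y - x)" if "z \<in> ?S" for z
      proof -
        have "norm (z - x) \<le> norm (y - x)"
          using that by (simp add: dist_norm norm_minus_commute)
        then show ?thesis
          using D1_le[of z] \<open>norm (y - x) < d\<close> \<open>0 < e\<close>
          by (simp add: norm_blinfun.rep_eq[symmetric]) (smt (verit) mult_left_mono)
      qed
    qed (auto simp: dist_norm norm_minus_commute)
    then show ?thesis
      using \<phi>(2) by (simp add: power2_eq_square)
  qed
  then show ?thesis
    using \<open>0 < d\<close> by blast
qed

section \<open>The contact inequality\<close>

lemma bounded_linear_perp: "bounded_linear (perp \<xi>)"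
  unfolding perp_def[abs_def] by (auto intro!: bounded_linear_intros)

lemma perp_add: "perp \<xi> (v + w) = perp \<xi> v + perp \<xi> w"
  by (simp add: perp_def inner_add_right algebra_simps)

lemma perp_diff: "perp \<xi> (v - w) = perp \<xi> v - perp \<xi> w"
  by (simp add: perp_def inner_diff_right algebra_simps)

lemma inner_perp:
  assumes "norm \<xi> = 1"
  shows "\<xi> \<bullet> perp \<xi> v = 0"
  using assms by (simp add: perp_def inner_diff_right norm_eq_1)

lemma perp_scaleR_self:
  assumes "norm \<xi> = 1"
  shows "perp \<xi> (c *\<^sub>R \<xi>) = 0"
  using assms by (simp add: perp_def norm_eq_1)

lemma perp_perp:
  assumes "norm \<xi> = 1"
  shows "perp \<xi> (perp \<xi> v) = perp \<xi> v"
  using inner_perp[OF assms] by (simp add: perp_def[of \<xi> "perp \<xi> v"])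

lemma norm_perp_le:
  assumes "norm \<xi> = 1"
  shows "norm (perp \<xi> v) \<le> norm v"
proof -
  have "(norm (perp \<xi> v))\<^sup>2 = perp \<xi> v \<bullet> v"
    using inner_perp[OF assms, of v]
    by (simp add: power2_norm_eq_inner perp_def[of \<xi> v] inner_diff_left inner_commute)
  also have "\<dots> \<le> norm (perp \<xi> v) * norm v"
    by (rule norm_cauchy_schwarz)
  finally have "norm (perp \<xi> v) * norm (perp \<xi> v) \<le> norm (perp \<xi> v) * norm v"
    by (simp add: power2_eq_square)
  then show ?thesis
    by (cases "norm (perp \<xi> v) = 0") (auto simp: mult_le_cancel_left)
qed

lemma norm_add_squared_le: "(norm (a + b))\<^sup>2 \<le> 2 * (norm a)\<^sup>2 + 2 * (norm b)\<^sup>2"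
proof -
  have "(norm (a + b))\<^sup>2 \<le> (norm a + norm b)\<^sup>2"
    by (simp add: norm_triangle_ineq power_mono)
  also have "\<dots> \<le> 2 * (norm a)\<^sup>2 + 2 * (norm b)\<^sup>2"
    using zero_le_power2[of "norm a - norm b"] by (simp add: power2_sum power2_diff)
  finally show ?thesis .
qed

definition second_contact_cone ::
  "'a::euclidean_space set \<Rightarrow> 'a \<Rightarrow> 'b::euclidean_space \<Rightarrow> ('a \<Rightarrow> 'b) \<Rightarrow> bool" where
  "second_contact_cone \<Omega> x \<xi> v \<longleftrightarrow> (\<forall>L>0. \<exists>r>0. \<forall>y\<in>\<Omega> \<inter> ball x r.
     (norm (perp \<xi> (v y)))\<^sup>2 \<le> L\<^sup>2 * (norm (y - x))\<^sup>2 * (- (\<xi> \<bullet> v y)))"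

lemma second_contact_map_iff:
  "second_contact_map \<Omega> u x \<xi> \<psi> \<longleftrightarrow>
     C2 \<psi> \<and> \<psi> x = u x \<and> second_contact_cone \<Omega> x \<xi> (\<lambda>y. u y - \<psi> y)"
  by (simp add: second_contact_map_def second_contact_cone_def)

lemma contact_inequality_add:
  assumes "(norm (perp \<xi> v))\<^sup>2 \<le> (L / 2)\<^sup>2 * \<rho> * (- (\<xi> \<bullet> v))"
    and "(norm (perp \<xi> w))\<^sup>2 \<le> (L / 2)\<^sup>2 * \<rho> * (- (\<xi> \<bullet> w))"
  shows "(norm (perp \<xi> (v + w)))\<^sup>2 \<le> L\<^sup>2 * \<rho> * (- (\<xi> \<bullet> (v + w)))"
proof -
  have "(norm (perp \<xi> (v + w)))\<^sup>2 \<le> 2 * (norm (perp \<xi> v))\<^sup>2 + 2 * (norm (perp \<xi> w))\<^sup>2"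
    by (simp add: perp_add norm_add_squared_le)
  moreover have "L\<^sup>2 * \<rho> * (- (\<xi> \<bullet> (v + w)))
      = 4 * ((L / 2)\<^sup>2 * \<rho> * (- (\<xi> \<bullet> v))) + 4 * ((L / 2)\<^sup>2 * \<rho> * (- (\<xi> \<bullet> w)))"
    by (simp add: inner_add_right power_divide algebra_simps)
  moreover have "0 \<le> (norm (perp \<xi> v))\<^sup>2" "0 \<le> (norm (perp \<xi> w))\<^sup>2"
    by simp_all
  ultimately show ?thesis
    using assms by linarith
qed

lemma second_contact_cone_add:
  assumes v: "second_contact_cone \<Omega> x \<xi> v" and w: "second_contact_cone \<Omega> x \<xi> w"
  shows "second_contact_cone \<Omega> x \<xi> (\<lambda>y. v y + w y)"
  unfolding second_contact_cone_def
proof (intro allI impI)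
  fix L :: real
  assume "0 < L"
  then have "0 < L / 2"
    by simp
  with v obtain r1 where "0 < r1"
    and v_le: "\<forall>y\<in>\<Omega> \<inter> ball x r1.
      (norm (perp \<xi> (v y)))\<^sup>2 \<le> (L / 2)\<^sup>2 * (norm (y - x))\<^sup>2 * (- (\<xi> \<bullet> v y))"
    unfolding second_contact_cone_def by blast
  from \<open>0 < L / 2\<close> w obtain r2 where "0 < r2"
    and w_le: "\<forall>y\<in>\<Omega> \<inter> ball x r2.
      (norm (perp \<xi> (w y)))\<^sup>2 \<le> (L / 2)\<^sup>2 * (norm (y - x))\<^sup>2 * (- (\<xi> \<bullet> w y))"
    unfolding second_contact_cone_def by blast
  show "\<exists>r>0. \<forall>y\<in>\<Omega> \<inter> ball x r.
      (norm (perp \<xi> (v y + w y)))\<^sup>2 \<le> L\<^sup>2 * (norm (y - x))\<^sup>2 * (- (\<xi> \<bullet> (v y + w y)))"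
  proof (intro exI[of _ "min r1 r2"] conjI ballI)
    show "0 < min r1 r2"
      using \<open>0 < r1\<close> \<open>0 < r2\<close> by simp
    fix y
    assume "y \<in> \<Omega> \<inter> ball x (min r1 r2)"
    then have "y \<in> \<Omega> \<inter> ball x r1" "y \<in> \<Omega> \<inter> ball x r2"
      by auto
    then show "(norm (perp \<xi> (v y + w y)))\<^sup>2 \<le> L\<^sup>2 * (norm (y - x))\<^sup>2 * (- (\<xi> \<bullet> (v y + w y)))"
      by (intro contact_inequality_add v_le[rule_format] w_le[rule_format])
  qed
qed

lemma second_contact_cone_perp_diff:
  assumes "norm \<xi> = 1"
    and dom: "\<And>c. 0 < c \<Longrightarrow> \<exists>d>0. \<forall>y. norm (y - x) < d \<longrightarrow>
      (norm (R y))\<^sup>2 \<le> c * (norm (y - x))\<^sup>2 * g y"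
  shows "second_contact_cone \<Omega> x \<xi> (\<lambda>y. perp \<xi> (R y) - g y *\<^sub>R \<xi>)"
  unfolding second_contact_cone_def
proof (intro allI impI)
  fix L :: real
  assume "0 < L"
  then obtain d where "0 < d"
    and R_le: "\<And>y. norm (y - x) < d \<Longrightarrow> (norm (R y))\<^sup>2 \<le> L\<^sup>2 * (norm (y - x))\<^sup>2 * g y"
    using dom[of "L\<^sup>2"] by auto
  have "(norm (perp \<xi> (perp \<xi> (R y) - g y *\<^sub>R \<xi>)))\<^sup>2
      \<le> L\<^sup>2 * (norm (y - x))\<^sup>2 * (- (\<xi> \<bullet> (perp \<xi> (R y) - g y *\<^sub>R \<xi>)))"
    if "norm (y - x) < d" for y
  proof -
    have "(norm (perp \<xi> (perp \<xi> (R y) - g y *\<^sub>R \<xi>)))\<^sup>2 = (norm (perp \<xi> (R y)))\<^sup>2"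
      using assms(1) by (simp add: perp_diff perp_perp perp_scaleR_self)
    also have "\<dots> \<le> (norm (R y))\<^sup>2"
      using norm_perp_le[OF assms(1)] by (simp add: power_mono)
    also have "\<dots> \<le> L\<^sup>2 * (norm (y - x))\<^sup>2 * g y"
      using R_le[OF that] .
    also have "\<dots> = L\<^sup>2 * (norm (y - x))\<^sup>2 * (- (\<xi> \<bullet> (perp \<xi> (R y) - g y *\<^sub>R \<xi>)))"
      using assms(1) by (simp add: inner_diff_right inner_perp norm_eq_1)
    finally show ?thesis .
  qed
  then show "\<exists>r>0. \<forall>y\<in>\<Omega> \<inter> ball x r. (norm (perp \<xi> (perp \<xi> (R y) - g y *\<^sub>R \<xi>)))\<^sup>2
      \<le> L\<^sup>2 * (norm (y - x))\<^sup>2 * (- (\<xi> \<bullet> (perp \<xi> (R y) - g y *\<^sub>R \<xi>)))"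
    using \<open>0 < d\<close> by (intro exI[of _ d]) (auto simp: dist_norm norm_minus_commute)
qed

section \<open>Moduli and a C^2 majorant\<close>

definition regular_modulus :: "(real \<Rightarrow> real) \<Rightarrow> bool" where
  "regular_modulus w \<longleftrightarrow> w 0 = 0 \<and> (\<forall>t\<ge>0. 0 \<le> w t) \<and> mono_on {0..} w \<and>
     (\<forall>s t. 0 \<le> s \<longrightarrow> s \<le> t \<longrightarrow> 0 < t \<longrightarrow> s / t * w t \<le> w s) \<and>
     (\<forall>c>0. \<exists>d>0. \<forall>t. 0 \<le> t \<longrightarrow> t < d \<longrightarrow> w t \<le> c)"

(* An infimum of functions affine in t, hence concave: this is what makes w t / t nonincreasing. *)
definition modulus_from_radii :: "(real \<Rightarrow> real) \<Rightarrow> real \<Rightarrow> real" where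
  "modulus_from_radii \<delta> t = (INF e\<in>{0<..1}. e + t / \<delta> e)"

lemma modulus_from_radii_le:
  assumes "\<And>e. 0 < e \<Longrightarrow> 0 < \<delta> e" "0 \<le> t" "e \<in> {0<..1}"
  shows "modulus_from_radii \<delta> t \<le> e + t / \<delta> e"
proof -
  have "bdd_below ((\<lambda>e. e + t / \<delta> e) ` {0<..1})"
    using assms(1,2) by (intro bdd_belowI2[of _ 0]) (simp add: add_nonneg_nonneg less_imp_le)
  then show ?thesis
    unfolding modulus_from_radii_def using assms(3) by (rule cINF_lower)
qed

lemma le_modulus_from_radii:
  assumes "\<And>e. e \<in> {0<..1} \<Longrightarrow> z \<le> e + t / \<delta> e"
  shows "z \<le> modulus_from_radii \<delta> t"
  unfolding modulus_from_radii_def using assms by (intro cINF_greatest) auto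

lemma regular_modulus_from_radii:
  assumes \<delta>: "\<And>e. 0 < e \<Longrightarrow> 0 < \<delta> e"
  shows "regular_modulus (modulus_from_radii \<delta>)"
proof -
  let ?w = "modulus_from_radii \<delta>"
  have nonneg: "0 \<le> ?w t" if "0 \<le> t" for t
    using \<delta> that by (intro le_modulus_from_radii) (simp add: add_nonneg_nonneg less_imp_le)
  have small: "\<exists>d>0. \<forall>t. 0 \<le> t \<longrightarrow> t < d \<longrightarrow> ?w t \<le> c" if "0 < c" for c
  proof -
    define e where "e = min 1 (c / 2)"
    have e: "e \<in> {0<..1}" "e \<le> c / 2" and "0 < \<delta> e"
      using that \<delta> by (auto simp: e_def)
    have "?w t \<le> c" if "0 \<le> t" "t < \<delta> e * (c / 2)" for t
    proof -
      have "t / \<delta> e \<le> c / 2"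
        using that \<open>0 < \<delta> e\<close> by (simp add: divide_le_eq mult.commute)
      then show ?thesis
        using modulus_from_radii_le[of \<delta>, OF \<delta> \<open>0 \<le> t\<close> e(1)] e(2) by linarith
    qed
    then show ?thesis
      using \<open>0 < \<delta> e\<close> \<open>0 < c\<close> by (intro exI[of _ "\<delta> e * (c / 2)"]) auto
  qed
  have "?w 0 \<le> 0"
  proof (rule field_le_epsilon)
    fix c :: real
    assume "0 < c"
    then show "?w 0 \<le> 0 + c"
      using small[of c] by auto
  qed
  then have "?w 0 = 0"
    using nonneg[of 0] by simp
  moreover have "mono_on {0..} ?w"
  proof (rule mono_onI, rule le_modulus_from_radii)
    fix s t e :: real
    assume "s \<in> {0..}" "t \<in> {0..}" "s \<le> t" "e \<in> {0<..1}"
    moreover from this have "s / \<delta> e \<le> t / \<delta> e"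
      using \<delta>[of e] by (simp add: divide_right_mono less_imp_le)
    ultimately show "?w s \<le> e + t / \<delta> e"
      using modulus_from_radii_le[of \<delta> s e, OF \<delta>] by simp
  qed
  moreover have "s / t * ?w t \<le> ?w s" if "0 \<le> s" "s \<le> t" "0 < t" for s t
  proof (rule le_modulus_from_radii)
    fix e :: real
    assume e: "e \<in> {0<..1}"
    have "s / t * ?w t \<le> s / t * (e + t / \<delta> e)"
      using modulus_from_radii_le[of \<delta> t e, OF \<delta>] e that by (intro mult_left_mono) auto
    also have "\<dots> = s / t * e + s / \<delta> e"
      using that by (simp add: field_simps)
    also have "\<dots> \<le> e + s / \<delta> e"
      using that e mult_right_mono[of "s / t" 1 e] by simp
    finally show "s / t * ?w t \<le> e + s / \<delta> e" .
  qed
  ultimately show ?thesis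
    using nonneg small unfolding regular_modulus_def by blast
qed

lemma norm_le_modulus_from_radii:
  fixes R :: "'a::real_normed_vector \<Rightarrow> 'b::real_normed_vector"
  assumes \<delta>: "\<And>e. 0 < e \<Longrightarrow>
      0 < \<delta> e \<and> (\<forall>y. norm (y - x) < \<delta> e \<longrightarrow> norm (R y) \<le> e * (norm (y - x))\<^sup>2)"
    and y: "norm (y - x) < \<delta> 1"
  shows "norm (R y) \<le> modulus_from_radii \<delta> (norm (y - x)) * (norm (y - x))\<^sup>2"
proof (cases "y = x")
  case True
  have "norm (R x) \<le> (norm (x - x))\<^sup>2"
    using \<delta>[of 1] by (metis diff_self mult_1 norm_zero zero_less_one)
  then show ?thesis
    using True by simp
next
  case False
  let ?r = "norm (y - x)"
  have r: "0 < ?r"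
    using False by simp
  have "norm (R y) / ?r\<^sup>2 \<le> modulus_from_radii \<delta> ?r"
  proof (rule le_modulus_from_radii)
    fix e :: real
    assume e: "e \<in> {0<..1}"
    show "norm (R y) / ?r\<^sup>2 \<le> e + ?r / \<delta> e"
    proof (cases "?r < \<delta> e")
      case True
      then have "norm (R y) / ?r\<^sup>2 \<le> e"
        using \<delta>[of e] e r by (simp add: divide_le_eq)
      moreover have "0 \<le> ?r / \<delta> e"
        using \<delta>[of e] e by simp
      ultimately show ?thesis
        by linarith
    next
      case False
      then have "1 \<le> ?r / \<delta> e"
        using \<delta>[of e] e by simp
      moreover have "norm (R y) / ?r\<^sup>2 \<le> 1"
        using \<delta>[of 1] y r by simp
      moreover have "0 < e"
        using e by simp
      ultimately show ?thesis
        by linarith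
    qed
  qed
  then show ?thesis
    using r by (simp add: divide_le_eq)
qed

lemma regular_modulus_exists:
  fixes R :: "'a::real_normed_vector \<Rightarrow> 'b::real_normed_vector"
  assumes small: "\<And>e. 0 < e \<Longrightarrow> \<exists>d>0. \<forall>y. norm (y - x) < d \<longrightarrow> norm (R y) \<le> e * (norm (y - x))\<^sup>2"
  obtains w d where "regular_modulus w" "0 < d"
    "\<And>y. norm (y - x) < d \<Longrightarrow> norm (R y) \<le> w (norm (y - x)) * (norm (y - x))\<^sup>2"
proof -
  have "\<forall>e. \<exists>d. 0 < e \<longrightarrow>
      0 < d \<and> (\<forall>y. norm (y - x) < d \<longrightarrow> norm (R y) \<le> e * (norm (y - x))\<^sup>2)"
    using small by blast
  then obtain \<delta> where \<delta>: "\<And>e. 0 < e \<Longrightarrow>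
      0 < \<delta> e \<and> (\<forall>y. norm (y - x) < \<delta> e \<longrightarrow> norm (R y) \<le> e * (norm (y - x))\<^sup>2)"
    using choice[of "\<lambda>e d. 0 < e \<longrightarrow> 0 < d \<and>
      (\<forall>y. norm (y - x) < d \<longrightarrow> norm (R y) \<le> e * (norm (y - x))\<^sup>2)"] by blast
  have "regular_modulus (modulus_from_radii \<delta>)"
    using \<delta> by (intro regular_modulus_from_radii) blast
  moreover have "0 < \<delta> 1"
    using \<delta>[of 1] by simp
  ultimately show thesis
    using that norm_le_modulus_from_radii[OF \<delta>] by blast
qed

lemma regular_modulus_dist_le:
  assumes w: "regular_modulus w" and "0 < a" "0 \<le> \<tau>"
  shows "\<bar>w \<tau> - w a\<bar> \<le> \<bar>\<tau> - a\<bar> / a * w a"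
proof (cases "a \<le> \<tau>")
  case True
  have "w a \<le> w \<tau>"
    using w unfolding regular_modulus_def
    by (intro mono_onD[of "{0..}" w]) (use True \<open>0 < a\<close> in auto)
  moreover have "a / \<tau> * w \<tau> \<le> w a"
    using w True \<open>0 < a\<close> unfolding regular_modulus_def by auto
  then have "w \<tau> - w a \<le> (\<tau> - a) / a * w a"
    using True \<open>0 < a\<close> by (simp add: field_simps)
  ultimately show ?thesis
    using True by simp
next
  case False
  have "w \<tau> \<le> w a"
    using w unfolding regular_modulus_def
    by (intro mono_onD[of "{0..}" w]) (use False \<open>0 \<le> \<tau>\<close> in auto)
  moreover have "\<tau> / a * w a \<le> w \<tau>"
    using w False \<open>0 < a\<close> \<open>0 \<le> \<tau>\<close> unfolding regular_modulus_def by auto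
  then have "w a - w \<tau> \<le> (a - \<tau>) / a * w a"
    using \<open>0 < a\<close> by (simp add: field_simps)
  ultimately show ?thesis
    using False by simp
qed

lemma regular_modulus_continuous_on:
  assumes w: "regular_modulus w"
  shows "continuous_on {0..} w"
  unfolding continuous_on_iff
proof (intro ballI allI impI)
  fix a e :: real
  assume "a \<in> {0..}" "0 < e"
  show "\<exists>d>0. \<forall>\<tau>\<in>{0..}. dist \<tau> a < d \<longrightarrow> dist (w \<tau>) (w a) < e"
  proof (cases "a = 0")
    case True
    obtain d where "0 < d" and w_le: "\<And>t. 0 \<le> t \<Longrightarrow> t < d \<Longrightarrow> w t \<le> e / 2"
      using w \<open>0 < e\<close> unfolding regular_modulus_def by (meson half_gt_zero)
    have "dist (w \<tau>) (w a) < e" if "\<tau> \<in> {0..}" "dist \<tau> a < d" for \<tau>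
      using w_le[of \<tau>] w that True \<open>0 < e\<close> by (simp add: dist_real_def regular_modulus_def)
    then show ?thesis
      using \<open>0 < d\<close> by blast
  next
    case False
    then have "0 < a"
      using \<open>a \<in> {0..}\<close> by simp
    then have "0 \<le> w a"
      using w by (simp add: regular_modulus_def)
    define d where "d = e * a / (w a + 1)"
    have "0 < d"
      using \<open>0 < e\<close> \<open>0 < a\<close> \<open>0 \<le> w a\<close> by (simp add: d_def)
    have "dist (w \<tau>) (w a) < e" if "\<tau> \<in> {0..}" "dist \<tau> a < d" for \<tau>
    proof -
      have "dist (w \<tau>) (w a) \<le> \<bar>\<tau> - a\<bar> / a * w a"
        using regular_modulus_dist_le[OF w \<open>0 < a\<close>, of \<tau>] that by (simp add: dist_real_def)
      also have "\<dots> \<le> d / a * w a"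
        using that \<open>0 < a\<close> \<open>0 \<le> w a\<close>
        by (intro mult_right_mono divide_right_mono) (auto simp: dist_real_def)
      also have "\<dots> = e * w a / (w a + 1)"
        using \<open>0 < a\<close> by (simp add: d_def)
      also have "\<dots> < e"
        using \<open>0 < e\<close> \<open>0 \<le> w a\<close> by (simp add: pos_divide_less_eq)
      finally show ?thesis .
    qed
    then show ?thesis
      using \<open>0 < d\<close> by blast
  qed
qed

lemma real_antiderivative_exists:
  fixes w :: "real \<Rightarrow> real"
  assumes w: "continuous_on UNIV w"
  obtains F where "F 0 = 0" "\<And>t. (F has_real_derivative w t) (at t)"
proof -
  \<comment> \<open>One of the two intervals is empty or a point, so this is the signed integral from 0 to t.\<close>
  define F where "F t = integral {0..t} w - integral {t..0} w" for t
  have "(F has_real_derivative w t) (at t)" for t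
  proof -
    define a where "a = - \<bar>t\<bar> - 1"
    define b where "b = \<bar>t\<bar> + 1"
    have ab: "a < t" "t < b" "a < 0" "0 < b"
      by (auto simp: a_def b_def)
    have int: "w integrable_on {c..d}" for c d
      by (intro integrable_continuous_real continuous_on_subset[OF w]) simp
    have F_eq: "integral {a..s} w - integral {a..0} w = F s" if "s \<in> {a<..<b}" for s
    proof (cases "0 \<le> s")
      case True
      then have "integral {a..0} w + integral {0..s} w = integral {a..s} w"
        using ab by (intro Henstock_Kurzweil_Integration.integral_combine int) simp_all
      then show ?thesis
        using True by (cases "s = 0") (simp_all add: F_def)
    next
      case False
      then have "integral {a..s} w + integral {s..0} w = integral {a..0} w"
        using ab that by (intro Henstock_Kurzweil_Integration.integral_combine int) simp_all
      then show ?thesis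
        using False by (simp add: F_def algebra_simps)
    qed
    have "((\<lambda>s. integral {a..s} w) has_real_derivative w t) (at t within {a..b})"
      using ab by (intro integral_has_real_derivative continuous_on_subset[OF w]) auto
    moreover have "at t within {a..b} = at t"
      using ab by (intro at_within_interior) auto
    ultimately have "((\<lambda>s. integral {a..s} w) has_real_derivative w t) (at t)"
      by simp
    from DERIV_diff[OF this DERIV_const[of "integral {a..0} w"]]
    have "((\<lambda>s. integral {a..s} w - integral {a..0} w) has_real_derivative w t) (at t)"
      by simp
    from has_field_derivative_transform_within_open[OF this, of "{a<..<b}" F] F_eq ab
    show ?thesis
      by simp
  qed
  moreover have "F 0 = 0"
    by (simp add: F_def)
  ultimately show thesis
    using that by blast
qed

lemma second_antiderivative_lower_bound:
  fixes G F w :: "real \<Rightarrow> real"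
  assumes G': "\<And>s. (G has_real_derivative F s) (at s)"
    and F': "\<And>s. (F has_real_derivative w s) (at s)"
    and "G 0 = 0" "F 0 = 0" "0 \<le> t" and w_ge: "\<And>s. 0 \<le> s \<Longrightarrow> s \<le> t \<Longrightarrow> c * s \<le> w s"
  shows "c * t ^ 3 / 6 \<le> G t"
proof -
  have dF: "((\<lambda>s. F s - c * s\<^sup>2 / 2) has_real_derivative w s - c * s) (at s)" for s
    using F' by (auto intro!: derivative_eq_intros)
  have dG: "((\<lambda>s. G s - c * s ^ 3 / 6) has_real_derivative F s - c * s\<^sup>2 / 2) (at s)" for s
    using G' by (auto intro!: derivative_eq_intros simp: power2_eq_square)
  have F_ge: "c * s\<^sup>2 / 2 \<le> F s" if "0 \<le> s" "s \<le> t" for s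
  proof -
    have "F 0 - c * 0\<^sup>2 / 2 \<le> F s - c * s\<^sup>2 / 2"
    proof (rule DERIV_nonneg_imp_nondecreasing[OF \<open>0 \<le> s\<close>])
      fix \<sigma> :: real
      assume "0 \<le> \<sigma>" "\<sigma> \<le> s"
      then show "\<exists>y. ((\<lambda>s. F s - c * s\<^sup>2 / 2) has_real_derivative y) (at \<sigma>) \<and> 0 \<le> y"
        using dF[of \<sigma>] w_ge[of \<sigma>] that by (intro exI[of _ "w \<sigma> - c * \<sigma>"]) simp
    qed
    then show ?thesis
      using \<open>F 0 = 0\<close> by simp
  qed
  have "G 0 - c * 0 ^ 3 / 6 \<le> G t - c * t ^ 3 / 6"
  proof (rule DERIV_nonneg_imp_nondecreasing[OF \<open>0 \<le> t\<close>])
    fix \<sigma> :: real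
    assume "0 \<le> \<sigma>" "\<sigma> \<le> t"
    then show "\<exists>y. ((\<lambda>s. G s - c * s ^ 3 / 6) has_real_derivative y) (at \<sigma>) \<and> 0 \<le> y"
      using dG[of \<sigma>] F_ge[of \<sigma>] by (intro exI[of _ "F \<sigma> - c * \<sigma>\<^sup>2 / 2"]) simp
  qed
  then show ?thesis
    using \<open>G 0 = 0\<close> by simp
qed

lemma second_antiderivative_of_modulus_bounds:
  assumes w: "regular_modulus w"
    and F: "F 0 = 0" "\<And>t. (F has_real_derivative w \<bar>t\<bar>) (at t)"
    and H: "H 0 = 0" "\<And>t. (H has_real_derivative F t) (at t)"
    and "0 \<le> t"
  shows "t\<^sup>2 * w t / 6 \<le> H t" and "0 \<le> H (- t)"
proof -
  have "w t / t * t ^ 3 / 6 \<le> H t"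
  proof (rule second_antiderivative_lower_bound[OF H(2) F(2) H(1) F(1) \<open>0 \<le> t\<close>])
    fix s :: real
    assume "0 \<le> s" "s \<le> t"
    moreover have "s / t * w t \<le> w s" if "0 < t"
      using w \<open>0 \<le> s\<close> \<open>s \<le> t\<close> that by (simp add: regular_modulus_def)
    moreover have "0 \<le> w 0"
      using w by (simp add: regular_modulus_def)
    ultimately show "w t / t * s \<le> w \<bar>s\<bar>"
      by (cases "t = 0") (simp_all add: mult.commute)
  qed
  then show "t\<^sup>2 * w t / 6 \<le> H t"
    by (cases "t = 0") (simp_all add: power2_eq_square power3_eq_cube mult_ac)
  have "0 * t ^ 3 / 6 \<le> H (- t)"
  proof (rule second_antiderivative_lower_bound[of "\<lambda>s. H (- s)" "\<lambda>s. - F (- s)" "\<lambda>s. w \<bar>s\<bar>"])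
    show "((\<lambda>s. H (- s)) has_real_derivative - F (- s)) (at s)" for s
      using DERIV_mirror[of H "F (- s)" s] H(2) by simp
    show "((\<lambda>s. - F (- s)) has_real_derivative w \<bar>s\<bar>) (at s)" for s
      using DERIV_minus[OF DERIV_mirror[of F "w \<bar>- s\<bar>" s, THEN iffD1, OF F(2)]] by simp
  qed (use H F \<open>0 \<le> t\<close> w in \<open>auto simp: regular_modulus_def\<close>)
  then show "0 \<le> H (- t)"
    by simp
qed

lemma C2_majorant_of_regular_modulus:
  assumes w: "regular_modulus w"
  obtains G G' G'' :: "real \<Rightarrow> real"
  where "\<And>t. (G has_real_derivative G' t) (at t)" "\<And>t. (G' has_real_derivative G'' t) (at t)"
    "continuous_on UNIV G''" "G 0 = 0" "G' 0 = 0" "G'' 0 = 0" "\<And>t. t\<^sup>2 * w \<bar>t\<bar> / 6 \<le> G t"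
proof -
  have cont: "continuous_on UNIV (\<lambda>t. w \<bar>t\<bar>)"
    using regular_modulus_continuous_on[OF w]
    by (rule continuous_on_compose2) (auto intro: continuous_intros)
  obtain F where F: "F 0 = 0" "\<And>t. (F has_real_derivative w \<bar>t\<bar>) (at t)"
    using real_antiderivative_exists[OF cont] by blast
  have "continuous_on UNIV F"
    using F(2) by (meson DERIV_isCont continuous_at_imp_continuous_on)
  then obtain H where H: "H 0 = 0" "\<And>t. (H has_real_derivative F t) (at t)"
    using real_antiderivative_exists by blast
  note bounds = second_antiderivative_of_modulus_bounds[OF w F H]
  show thesis
  proof (rule that[of "\<lambda>t. H t + H (- t)" "\<lambda>t. F t - F (- t)" "\<lambda>t. 2 * w \<bar>t\<bar>"])
    show "((\<lambda>t. H t + H (- t)) has_real_derivative F t - F (- t)) (at t)" for t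
      using DERIV_add[OF H(2) DERIV_mirror[of H "F (- t)" t, THEN iffD1, OF H(2)]] by simp
    show "((\<lambda>t. F t - F (- t)) has_real_derivative 2 * w \<bar>t\<bar>) (at t)" for t
      using DERIV_diff[OF F(2) DERIV_mirror[of F "w \<bar>- t\<bar>" t, THEN iffD1, OF F(2)]] by simp
    show "continuous_on UNIV (\<lambda>t. 2 * w \<bar>t\<bar>)"
      using cont by (intro continuous_intros)
    show "t\<^sup>2 * w \<bar>t\<bar> / 6 \<le> H t + H (- t)" for t
    proof (cases "0 \<le> t")
      case True
      then show ?thesis
        using bounds[OF True] by simp
    next
      case False
      then show ?thesis
        using bounds[of "- t"] by simp
    qed
  qed (use H F w in \<open>simp_all add: regular_modulus_def\<close>)
qed

lemma has_C2_derivs_sum_Basis: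
  fixes G G' G'' :: "real \<Rightarrow> real" and x :: "'a::euclidean_space"
  assumes G': "\<And>t. (G has_real_derivative G' t) (at t)"
    and G'': "\<And>t. (G' has_real_derivative G'' t) (at t)"
    and cont: "continuous_on UNIV G''"
  shows "has_C2_derivs (\<lambda>y. \<Sum>b\<in>Basis. G ((y - x) \<bullet> b))
      (\<lambda>y. \<Sum>b\<in>Basis. G' ((y - x) \<bullet> b) *\<^sub>R blinfun_inner_left b)
      (\<lambda>y. \<Sum>b\<in>Basis. G'' ((y - x) \<bullet> b) *\<^sub>R
        (blinfun_scaleR_left (blinfun_inner_left b) o\<^sub>L blinfun_inner_left b))"
  unfolding has_C2_derivs_def
proof (intro conjI allI)
  have coord: "((\<lambda>y. (y - x) \<bullet> b) has_derivative (\<lambda>h. h \<bullet> b)) (at y)" for b y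
    by (auto intro!: derivative_eq_intros)
  fix y
  have "((\<lambda>y. \<Sum>b\<in>Basis. G ((y - x) \<bullet> b)) has_derivative
      (\<lambda>h. \<Sum>b\<in>Basis. h \<bullet> b * G' ((y - x) \<bullet> b))) (at y)"
    by (intro has_derivative_sum DERIV_compose_FDERIV[OF G'] coord)
  moreover have "(\<lambda>h. \<Sum>b\<in>Basis. h \<bullet> b * G' ((y - x) \<bullet> b))
      = blinfun_apply (\<Sum>b\<in>Basis. G' ((y - x) \<bullet> b) *\<^sub>R blinfun_inner_left b)"
    by (simp add: fun_eq_iff blinfun.sum_left mult.commute scaleR_blinfun.rep_eq
        blinfun_inner_left.rep_eq)
  ultimately show "((\<lambda>y. \<Sum>b\<in>Basis. G ((y - x) \<bullet> b)) has_derivative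
      blinfun_apply (\<Sum>b\<in>Basis. G' ((y - x) \<bullet> b) *\<^sub>R blinfun_inner_left b)) (at y)"
    by simp
  have "((\<lambda>y. \<Sum>b\<in>Basis. G' ((y - x) \<bullet> b) *\<^sub>R blinfun_inner_left b) has_derivative
      (\<lambda>h. \<Sum>b\<in>Basis. (h \<bullet> b * G'' ((y - x) \<bullet> b)) *\<^sub>R blinfun_inner_left b)) (at y)"
    by (intro has_derivative_sum has_derivative_scaleR_left DERIV_compose_FDERIV[OF G''] coord)
  moreover have "(\<lambda>h. \<Sum>b\<in>Basis. (h \<bullet> b * G'' ((y - x) \<bullet> b)) *\<^sub>R blinfun_inner_left b)
      = blinfun_apply (\<Sum>b\<in>Basis. G'' ((y - x) \<bullet> b) *\<^sub>R
          (blinfun_scaleR_left (blinfun_inner_left b) o\<^sub>L blinfun_inner_left b))"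
    by (simp add: fun_eq_iff blinfun.sum_left mult.commute scaleR_blinfun.rep_eq
        blinfun_inner_left.rep_eq blinfun_scaleR_left.rep_eq blinfun_compose.rep_eq)
  ultimately show "((\<lambda>y. \<Sum>b\<in>Basis. G' ((y - x) \<bullet> b) *\<^sub>R blinfun_inner_left b) has_derivative
      blinfun_apply (\<Sum>b\<in>Basis. G'' ((y - x) \<bullet> b) *\<^sub>R
        (blinfun_scaleR_left (blinfun_inner_left b) o\<^sub>L blinfun_inner_left b))) (at y)"
    by simp
next
  have "continuous_on UNIV (\<lambda>y. G'' ((y - x) \<bullet> b))" for b
    by (rule continuous_on_compose2[OF cont]) (auto intro!: continuous_intros)
  then show "continuous_on UNIV (\<lambda>y. \<Sum>b\<in>Basis. G'' ((y - x) \<bullet> b) *\<^sub>R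
      (blinfun_scaleR_left (blinfun_inner_left b) o\<^sub>L blinfun_inner_left b))"
    by (intro continuous_intros)
qed

lemma norm_le_DIM_Basis_coordinate:
  fixes z :: "'a::euclidean_space"
  obtains b where "b \<in> Basis" "norm z \<le> DIM('a) * \<bar>z \<bullet> b\<bar>"
proof -
  have "(MAX b\<in>Basis. \<bar>z \<bullet> b\<bar>) \<in> (\<lambda>b. \<bar>z \<bullet> b\<bar>) ` Basis"
    by (intro Max_in) (auto simp: nonempty_Basis)
  then obtain b where b: "b \<in> Basis" and b_max: "(MAX b\<in>Basis. \<bar>z \<bullet> b\<bar>) = \<bar>z \<bullet> b\<bar>"
    by (rule imageE)
  have "norm z \<le> (\<Sum>b\<in>Basis. \<bar>z \<bullet> b\<bar>)"
    by (rule norm_le_l1)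
  also have "\<dots> \<le> DIM('a) * \<bar>z \<bullet> b\<bar>"
    unfolding b_max[symmetric] by (intro sum_bounded_above Max_ge) auto
  finally show thesis
    using b that by blast
qed

lemma sum_Basis_majorant_lower_bound:
  fixes z :: "'a::euclidean_space"
  assumes w: "regular_modulus w" and G_ge: "\<And>t. t\<^sup>2 * w \<bar>t\<bar> / 6 \<le> G t"
  shows "(norm z)\<^sup>2 * w (norm z) / (6 * DIM('a) ^ 3) \<le> (\<Sum>b\<in>Basis. G (z \<bullet> b))"
proof -
  define n where "n = real DIM('a)"
  let ?r = "norm z"
  have "1 \<le> n"
    by (simp add: n_def DIM_positive Suc_leI)
  have G_nonneg: "0 \<le> G t" for t
    using G_ge[of t] w by (smt (verit) abs_ge_zero divide_nonneg_nonneg mult_nonneg_nonneg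
        regular_modulus_def zero_le_power2)
  obtain b0 where b0: "b0 \<in> Basis" and "?r \<le> n * \<bar>z \<bullet> b0\<bar>"
    unfolding n_def by (rule norm_le_DIM_Basis_coordinate)
  define a where "a = \<bar>z \<bullet> b0\<bar>"
  have "?r \<le> n * a" "a \<le> ?r"
    using \<open>?r \<le> n * \<bar>z \<bullet> b0\<bar>\<close> Basis_le_norm[OF b0] by (simp_all add: a_def)
  have "a\<^sup>2 * w a / 6 \<le> G (z \<bullet> b0)"
    using G_ge[of "z \<bullet> b0"] by (simp add: a_def)
  also have "\<dots> \<le> (\<Sum>b\<in>Basis. G (z \<bullet> b))"
    using b0 G_nonneg by (intro member_le_sum) auto
  finally have sum_ge: "a\<^sup>2 * w a / 6 \<le> (\<Sum>b\<in>Basis. G (z \<bullet> b))" .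
  show ?thesis
  proof (cases "?r = 0")
    case True
    then show ?thesis
      using G_nonneg by (simp add: sum_nonneg)
  next
    case False
    then have "0 < ?r"
      by simp
    have "0 \<le> w ?r"
      using w by (simp add: regular_modulus_def)
    have "1 / n \<le> a / ?r"
      using \<open>?r \<le> n * a\<close> \<open>0 < ?r\<close> \<open>1 \<le> n\<close> by (simp add: field_simps)
    then have "w ?r / n \<le> a / ?r * w ?r"
      using mult_right_mono[OF _ \<open>0 \<le> w ?r\<close>] by fastforce
    also have "\<dots> \<le> w a"
      using w \<open>a \<le> ?r\<close> \<open>0 < ?r\<close> by (auto simp: regular_modulus_def a_def)
    finally have "w ?r / n \<le> w a" .
    moreover have "(?r / n)\<^sup>2 \<le> a\<^sup>2"
      using \<open>?r \<le> n * a\<close> \<open>1 \<le> n\<close> by (intro power_mono) (auto simp: field_simps)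
    ultimately have "(?r / n)\<^sup>2 * (w ?r / n) / 6 \<le> a\<^sup>2 * w a / 6"
      using \<open>0 \<le> w ?r\<close> \<open>1 \<le> n\<close> by (intro divide_right_mono mult_mono) auto
    moreover have "(?r / n)\<^sup>2 * (w ?r / n) / 6 = ?r\<^sup>2 * w ?r / (6 * DIM('a) ^ 3)"
      by (simp add: n_def power2_eq_square power3_eq_cube)
    ultimately show ?thesis
      using sum_ge by linarith
  qed
qed

lemma C2_flat_majorant_exists:
  fixes R :: "'a::euclidean_space \<Rightarrow> 'b::real_normed_vector"
  assumes small: "\<And>e. 0 < e \<Longrightarrow> \<exists>d>0. \<forall>y. norm (y - x) < d \<longrightarrow> norm (R y) \<le> e * (norm (y - x))\<^sup>2"
  obtains g :: "'a \<Rightarrow> real" where "C2_flat_at g x"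
    "\<And>c. 0 < c \<Longrightarrow> \<exists>d>0. \<forall>y. norm (y - x) < d \<longrightarrow> (norm (R y))\<^sup>2 \<le> c * (norm (y - x))\<^sup>2 * g y"
proof -
  obtain w d0 where w: "regular_modulus w" and "0 < d0"
    and R_le: "\<And>y. norm (y - x) < d0 \<Longrightarrow> norm (R y) \<le> w (norm (y - x)) * (norm (y - x))\<^sup>2"
    using regular_modulus_exists[OF small] by blast
  obtain G G' G'' where G: "\<And>t. (G has_real_derivative G' t) (at t)"
    "\<And>t. (G' has_real_derivative G'' t) (at t)" "continuous_on UNIV G''"
    and zeros: "G 0 = 0" "G' 0 = 0" "G'' 0 = 0" and G_ge: "\<And>t. t\<^sup>2 * w \<bar>t\<bar> / 6 \<le> G t"
    using C2_majorant_of_regular_modulus[OF w] by blast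
  define g where "g y = (\<Sum>b\<in>Basis. G ((y - x) \<bullet> b))" for y
  have "C2_flat_at g x"
    unfolding g_def[abs_def]
    by (rule C2_flat_atI[OF has_C2_derivs_sum_Basis[OF G]]) (simp_all add: zeros)
  moreover have "\<exists>d>0. \<forall>y. norm (y - x) < d \<longrightarrow> (norm (R y))\<^sup>2 \<le> c * (norm (y - x))\<^sup>2 * g y"
    if "0 < c" for c
  proof -
    let ?K = "6 * real DIM('a) ^ 3"
    have "0 < c / ?K"
      using \<open>0 < c\<close> by simp
    with w obtain d1 where "0 < d1" and w_le: "\<And>t. 0 \<le> t \<Longrightarrow> t < d1 \<Longrightarrow> w t \<le> c / ?K"
      unfolding regular_modulus_def by blast
    have "(norm (R y))\<^sup>2 \<le> c * (norm (y - x))\<^sup>2 * g y" if "norm (y - x) < min d0 d1" for y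
    proof -
      let ?r = "norm (y - x)"
      have "0 \<le> w ?r"
        using w by (simp add: regular_modulus_def)
      have "(norm (R y))\<^sup>2 \<le> (w ?r * ?r\<^sup>2)\<^sup>2"
        using R_le that by (intro power_mono) auto
      also have "\<dots> = w ?r * (w ?r * ?r\<^sup>2 * ?r\<^sup>2)"
        by (simp add: power2_eq_square mult_ac)
      also have "\<dots> \<le> c / ?K * (w ?r * ?r\<^sup>2 * ?r\<^sup>2)"
        using w_le[of ?r] that \<open>0 \<le> w ?r\<close> by (intro mult_right_mono) auto
      also have "\<dots> = c * ?r\<^sup>2 * (?r\<^sup>2 * w ?r / ?K)"
        by simp
      also have "\<dots> \<le> c * ?r\<^sup>2 * g y"
        using sum_Basis_majorant_lower_bound[OF w G_ge, of "y - x"] \<open>0 < c\<close>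
        by (intro mult_left_mono) (auto simp: g_def)
      finally show ?thesis .
    qed
    then show ?thesis
      using \<open>0 < d0\<close> \<open>0 < d1\<close> by (intro exI[of _ "min d0 d1"]) auto
  qed
  ultimately show thesis
    using that by blast
qed

theorem lemma36:
  fixes \<Omega> :: "(real^'n) set" and u :: "real^'n \<Rightarrow> real^'m"
    and x :: "real^'n" and \<xi> :: "real^'m" and \<psi> :: "real^'n \<Rightarrow> real^'m"
  assumes "open \<Omega>" and "continuous_on \<Omega> u" and "x \<in> \<Omega>" and "norm \<xi> = 1"
    and "second_contact_map \<Omega> u x \<xi> \<psi>"
  shows "\<exists>\<psi>h. second_contact_map \<Omega> u x \<xi> \<psi>h \<and> \<psi>h x = \<psi> x
           \<and> D1 \<psi>h x = D1 \<psi> x \<and> D2 \<psi>h x = D2 \<psi> x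
           \<and> (\<forall>y. perp \<xi> (R2 \<psi>h x y) = 0)"
proof -
  from assms(5) have C2: "C2 \<psi>" and "\<psi> x = u x"
    and cone: "second_contact_cone \<Omega> x \<xi> (\<lambda>y. u y - \<psi> y)"
    by (simp_all add: second_contact_map_iff)
  obtain g where g: "C2_flat_at g x"
    and dom: "\<And>c. 0 < c \<Longrightarrow> \<exists>d>0. \<forall>y. norm (y - x) < d \<longrightarrow>
      (norm (R2 \<psi> x y))\<^sup>2 \<le> c * (norm (y - x))\<^sup>2 * g y"
    using C2_flat_majorant_exists[OF C2_flat_at_imp_small[OF C2_flat_at_R2[OF C2, of x]]] by blast
  define \<phi> where "\<phi> y = g y *\<^sub>R \<xi> - perp \<xi> (R2 \<psi> x y)" for y
  have \<phi>: "C2_flat_at \<phi> x"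
    unfolding \<phi>_def[abs_def]
    by (intro C2_flat_at_diff C2_flat_at_linear[OF bounded_linear_scaleR_left g]
        C2_flat_at_linear[OF bounded_linear_perp C2_flat_at_R2[OF C2]])
  define \<psi>h where "\<psi>h y = \<psi> y + \<phi> y" for y
  have "second_contact_cone \<Omega> x \<xi> (\<lambda>y. (u y - \<psi> y) + (perp \<xi> (R2 \<psi> x y) - g y *\<^sub>R \<xi>))"
    by (intro second_contact_cone_add cone second_contact_cone_perp_diff[OF assms(4) dom])
  then have "second_contact_cone \<Omega> x \<xi> (\<lambda>y. u y - \<psi>h y)"
    by (simp add: \<psi>h_def \<phi>_def algebra_simps)
  moreover have "perp \<xi> (R2 \<psi>h x y) = 0" for y
    using assms(4) C2_add_C2_flat_at(4)[OF C2 \<phi>]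
    by (simp add: \<psi>h_def[abs_def] \<phi>_def perp_add perp_diff perp_perp perp_scaleR_self)
  ultimately show ?thesis
    using C2_add_C2_flat_at[OF C2 \<phi>] \<phi> \<open>\<psi> x = u x\<close>
    by (intro exI[of _ \<psi>h]) (auto simp: \<psi>h_def[abs_def] second_contact_map_iff C2_flat_at_def)
qed

end
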